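(* Let $S_i>0$, and let $u_{\min}<0<u_{\max}$ and $0<v_{\min}\le v_{\max}$ be constants. Let $v_i^0$ satisfy $v_{\min}\le v_i^0\le v_{\max}$. For $t_i^f>0$ define $$b_i=\frac{3(S_i-v_i^0t_i^f)}{2(t_i^f)^2},\qquad a_i=-\frac{b_i}{3t_i^f},$$ and the trajectory $p_i(t)=a_it^3+b_it^2+v_i^0t$, $v_i(t)=3a_it^2+2b_it+v_i^0$, $u_i(t)=6a_it+2b_i$ for $t\in[0,t_i^f]$ (so that $p_i(0)=0$, $v_i(0)=v_i^0$, $p_i(t_i^f)=S_i$, $u_i(t_i^f)=0$). Call $t_i^f$ feasible if $u_{\min}\le u_i(t)\le u_{\max}$ and $v_{\min}\le v_i(t)\le v_{\max}$ for all $t\in[0,t_i^f]$. Define $$t_{i,u_{\max}}^f=\frac{\sqrt{9(v_i^0)^2+12S_iu_{\max}}-3v_i^0}{2u_{\max}},\qquad t_{i,v_{\max}}^f=\frac{3S_i}{v_i^0+2v_{\max}},$$ and $t_{i,\min}^f=\min\{t_{i,u_{\max}}^f,\,t_{i,v_{\max}}^f\}$. Then $t_{i,\min}^f$ is a lower bound on the exit time imposed by the speed and control constraints: every feasible $t_i^f$ satisfies $t_i^f\ge t_{i,\min}^f$.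
   Context: This is the unconstrained energy-optimal (cubic-position) trajectory for a double-integrator vehicle $\dot p_i=v_i$, $\dot v_i=u_i$ traveling a distance $S_i$ starting at time $0$ from position $0$ with speed $v_i^0$, with exit time $t_i^f$ and terminal condition $u_i(t_i^f)=0$. The speed and control constraints are $u_{\min}\le u_i(t)\le u_{\max}$ and $0<v_{\min}\le v_i(t)\le v_{\max}$. *)

theory Defs
  imports Complex_Main
begin

definition traj_b :: "real \<Rightarrow> real \<Rightarrow> real \<Rightarrow> real" where
  "traj_b S v0 tf = 3 * (S - v0 * tf) / (2 * tf^2)"

definition traj_a :: "real \<Rightarrow> real \<Rightarrow> real \<Rightarrow> real" where
  "traj_a S v0 tf = - traj_b S v0 tf / (3 * tf)"

definition traj_p :: "real \<Rightarrow> real \<Rightarrow> real \<Rightarrow> real \<Rightarrow> real" where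
  "traj_p S v0 tf t = traj_a S v0 tf * t^3 + traj_b S v0 tf * t^2 + v0 * t"

definition traj_v :: "real \<Rightarrow> real \<Rightarrow> real \<Rightarrow> real \<Rightarrow> real" where
  "traj_v S v0 tf t = 3 * traj_a S v0 tf * t^2 + 2 * traj_b S v0 tf * t + v0"

definition traj_u :: "real \<Rightarrow> real \<Rightarrow> real \<Rightarrow> real \<Rightarrow> real" where
  "traj_u S v0 tf t = 6 * traj_a S v0 tf * t + 2 * traj_b S v0 tf"

definition feasible ::
  "real \<Rightarrow> real \<Rightarrow> real \<Rightarrow> real \<Rightarrow> real \<Rightarrow> real \<Rightarrow> real \<Rightarrow> bool" where
  "feasible umin umax vmin vmax S v0 tf \<longleftrightarrow>
     (\<forall>t\<in>{0..tf}. umin \<le> traj_u S v0 tf t \<and> traj_u S v0 tf t \<le> umax \<and>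
                   vmin \<le> traj_v S v0 tf t \<and> traj_v S v0 tf t \<le> vmax)"

definition tf_umax :: "real \<Rightarrow> real \<Rightarrow> real \<Rightarrow> real" where
  "tf_umax umax S v0 = (sqrt (9 * v0^2 + 12 * S * umax) - 3 * v0) / (2 * umax)"

definition tf_vmax :: "real \<Rightarrow> real \<Rightarrow> real \<Rightarrow> real" where
  "tf_vmax vmax S v0 = 3 * S / (v0 + 2 * vmax)"

definition tf_min :: "real \<Rightarrow> real \<Rightarrow> real \<Rightarrow> real \<Rightarrow> real" where
  "tf_min umax vmax S v0 = min (tf_umax umax S v0) (tf_vmax vmax S v0)"

end

theory Submission
  imports Defs
begin

(* The exit speed of the cubic is v(tf) = (3 S / tf - v0) / 2, so the speed bound
   v(tf) \<le> vmax alone rearranges to tf \<ge> 3 S / (v0 + 2 vmax) = tf_vmax \<ge> tf_min. *)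

lemma traj_v_at_exit:
  assumes "tf \<noteq> 0"
  shows "traj_v S v0 tf tf = (3 * S / tf - v0) / 2"
  using assms unfolding traj_v_def traj_a_def traj_b_def
  by (simp add: field_simps power2_eq_square power3_eq_cube)

lemma tf_vmax_le_if_exit_speed_le:
  assumes "0 < tf" and "0 < v0 + 2 * vmax"
    and "traj_v S v0 tf tf \<le> vmax"
  shows "tf_vmax vmax S v0 \<le> tf"
proof -
  have "3 * S / tf - v0 \<le> 2 * vmax"
    using assms(3) by (simp add: traj_v_at_exit[OF less_imp_neq[OF assms(1), symmetric]])
  then have "3 * S \<le> (v0 + 2 * vmax) * tf"
    using assms(1) by (simp add: divide_le_eq algebra_simps)
  then show ?thesis
    using assms(2) unfolding tf_vmax_def by (simp add: divide_le_eq mult.commute)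
qed

theorem proposition1:
  fixes S v0 umin umax vmin vmax tf :: real
  assumes "S > 0"
    and "umin < 0" and "0 < umax"
    and "0 < vmin" and "vmin \<le> vmax"
    and "vmin \<le> v0" and "v0 \<le> vmax"
    and "tf > 0"
    and "feasible umin umax vmin vmax S v0 tf"
  shows "tf \<ge> tf_min umax vmax S v0"
proof -
  have "traj_v S v0 tf tf \<le> vmax"
    using assms(8,9) unfolding feasible_def by auto
  moreover have "0 < v0 + 2 * vmax"
    using assms(4-7) by linarith
  ultimately have "tf_vmax vmax S v0 \<le> tf"
    using assms(8) by (intro tf_vmax_le_if_exit_speed_le)
  then show ?thesis
    unfolding tf_min_def by simp
qed

end
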